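(* Let $\alpha<\beta$ and let $S=S(\alpha,\beta;\infty)=\{z\in\mathbb{C}:z\ne0,\ \alpha<\arg z<\beta\}$. Let $f$ be holomorphic in $S$ and continuous on $\overline{S}$, and suppose there are $M,C,\lambda>0$ with $|f(z)|\le M$ for every $z\in S$ and $|f(z)|\le C/|z|^{\lambda}$ for every $z\neq 0$ with $\arg z=\alpha$. Then for every $z\in\overline{S}\setminus\{0\}$, $$|f(z)|\le K\Big(\frac{C}{|z|^{\lambda}}\Big)^{\frac{\beta-\theta}{\beta-\alpha}},$$ where $\theta=\arg z\in[\alpha,\beta]$ and $K=\max\{1,M\}$. *)

theory Defs
  imports "HOL-Complex_Analysis.Complex_Analysis"
begin

definition sector :: "real \<Rightarrow> real \<Rightarrow> complex set" where
  "sector \<alpha> \<beta> = {z. z \<noteq> 0 \<and> (\<exists>\<theta>. \<alpha> < \<theta> \<and> \<theta> < \<beta> \<and> z = of_real (cmod z) * cis \<theta>)}"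

end

theory Submission
  imports Defs "HOL-Real_Asymp.Real_Asymp"
begin

text \<open>Under \<open>exp\<close> the strip \<open>\<alpha> < Im w < \<beta>\<close> covers the sector, so it suffices to bound
\<open>F = f \<circ> exp\<close> there: \<open>|F| \<le> K = max 1 M\<close> throughout and \<open>|F (t + i\<alpha>)| \<le> exp (ln C - \<lambda> t)\<close>
on the lower edge. Dividing \<open>F\<close> by \<open>K exp \<psi>\<close>, with \<open>\<psi>\<close> holomorphic and \<open>Re \<psi>\<close> interpolating
linearly in \<open>Im w\<close> between the logarithms of these two edge bounds, gives a function of at most
exponential growth that is bounded by 1 on both edges. The Phragmen-Lindelof principle for a strip
bounds it by 1 everywhere: multiply by the Gaussian \<open>exp (- \<epsilon> w\<^sup>2)\<close>, which beats exponential
growth along the strip, apply the maximum modulus principle on long rectangles, and let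
\<open>\<epsilon> \<rightarrow> 0\<close>.\<close>

definition strip :: "real \<Rightarrow> real \<Rightarrow> complex set" where
  "strip a b = {w. a < Im w \<and> Im w < b}"

lemma closure_strip:
  assumes "a < b"
  shows "closure (strip a b) = {w. a \<le> Im w \<and> Im w \<le> b}"
proof -
  let ?above = "{w. \<i> \<bullet> w > a}" and ?below = "{w. \<i> \<bullet> w < b}"
  have strip_eq: "strip a b = ?above \<inter> ?below"
    by (auto simp: strip_def)
  have "Complex 0 ((a + b) / 2) \<in> rel_interior ?above \<inter> rel_interior ?below"
    using assms open_halfspace_gt[where a = \<i> and b = a] open_halfspace_lt[where a = \<i> and b = b]
    by (simp only: rel_interior_open) simp
  then have "closure (strip a b) = closure ?above \<inter> closure ?below"
    unfolding strip_eq by (intro closure_Int_convex convex_halfspace_gt convex_halfspace_lt) blast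
  moreover have "closure ?above = {w. \<i> \<bullet> w \<ge> a}"
    by (rule closure_halfspace_gt) simp
  moreover have "closure ?below = {w. \<i> \<bullet> w \<le> b}"
    by (rule closure_halfspace_lt) simp
  ultimately show ?thesis
    by auto
qed

lemma norm_mult_exp_gaussian:
  "cmod (z * exp (- of_real \<epsilon> * w\<^sup>2)) = cmod z * exp (\<epsilon> * ((Im w)\<^sup>2 - (Re w)\<^sup>2))"
  by (simp add: norm_mult norm_exp_eq_Re power2_eq_square algebra_simps)

lemma square_le_sum_squares_if_between:
  fixes a b s :: real
  assumes "a \<le> s" "s \<le> b"
  shows "s\<^sup>2 \<le> a\<^sup>2 + b\<^sup>2"
proof -
  have "\<bar>s\<bar> \<le> \<bar>a\<bar> \<or> \<bar>s\<bar> \<le> \<bar>b\<bar>"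
    using assms by linarith
  then have "s\<^sup>2 \<le> a\<^sup>2 \<or> s\<^sup>2 \<le> b\<^sup>2"
    by (simp add: abs_le_square_iff)
  then show ?thesis
    using zero_le_power2[of a] zero_le_power2[of b] by linarith
qed

lemma gaussian_damped_bound_rectangle_boundary:
  fixes z w :: complex and a b A B T \<epsilon> :: real
  assumes "\<epsilon> > 0" and decay: "A * exp (B * T - \<epsilon> * T\<^sup>2) < 1"
    and growth: "cmod w \<le> A * exp (B * \<bar>Re z\<bar>)"
    and edge: "Im z = a \<or> Im z = b \<Longrightarrow> cmod w \<le> 1"
    and "a \<le> Im z" "Im z \<le> b" and boundary: "Im z = a \<or> Im z = b \<or> \<bar>Re z\<bar> = T"
  shows "cmod (w * exp (- of_real \<epsilon> * z\<^sup>2)) \<le> exp (\<epsilon> * (a\<^sup>2 + b\<^sup>2))"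
proof -
  have Im_bound: "(Im z)\<^sup>2 \<le> a\<^sup>2 + b\<^sup>2"
    using assms by (intro square_le_sum_squares_if_between)
  from boundary consider "Im z = a \<or> Im z = b" | "\<bar>Re z\<bar> = T" by blast
  then show ?thesis
  proof cases
    case 1
    have "(Im z)\<^sup>2 - (Re z)\<^sup>2 \<le> a\<^sup>2 + b\<^sup>2"
      using Im_bound zero_le_power2[of "Re z"] by linarith
    then have gaussian: "exp (\<epsilon> * ((Im z)\<^sup>2 - (Re z)\<^sup>2)) \<le> exp (\<epsilon> * (a\<^sup>2 + b\<^sup>2))"
      using \<open>\<epsilon> > 0\<close> by simp
    have "cmod (w * exp (- of_real \<epsilon> * z\<^sup>2)) \<le> exp (\<epsilon> * ((Im z)\<^sup>2 - (Re z)\<^sup>2))"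
      unfolding norm_mult_exp_gaussian using edge[OF 1] by (rule mult_left_le_one_le[rotated 2]) simp_all
    with gaussian show ?thesis
      by linarith
  next
    case 2
    then have "(Re z)\<^sup>2 = T\<^sup>2"
      by (metis power2_abs)
    then have "cmod (w * exp (- of_real \<epsilon> * z\<^sup>2)) \<le> A * exp (B * T) * exp (\<epsilon> * ((Im z)\<^sup>2 - T\<^sup>2))"
      unfolding norm_mult_exp_gaussian using growth 2 by (simp add: mult_right_mono)
    also have "\<dots> = A * exp (B * T - \<epsilon> * T\<^sup>2) * exp (\<epsilon> * (Im z)\<^sup>2)"
      by (simp add: algebra_simps flip: exp_add)
    also have "\<dots> \<le> exp (\<epsilon> * (Im z)\<^sup>2)"
      using decay by simp
    also have "\<dots> \<le> exp (\<epsilon> * (a\<^sup>2 + b\<^sup>2))"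
      using Im_bound \<open>\<epsilon> > 0\<close> by (simp add: mult_left_mono)
    finally show ?thesis .
  qed
qed

lemma phragmen_lindelof_strip_damped:
  fixes g :: "complex \<Rightarrow> complex" and a b A B \<epsilon> :: real
  assumes hol: "g holomorphic_on strip a b"
    and cont: "continuous_on (closure (strip a b)) g"
    and growth: "\<And>w. w \<in> closure (strip a b) \<Longrightarrow> cmod (g w) \<le> A * exp (B * \<bar>Re w\<bar>)"
    and lower: "\<And>t. cmod (g (Complex t a)) \<le> 1"
    and upper: "\<And>t. cmod (g (Complex t b)) \<le> 1"
    and "\<epsilon> > 0" and w0: "w0 \<in> strip a b"
  shows "cmod (g w0) \<le> exp (\<epsilon> * ((Re w0)\<^sup>2 - (Im w0)\<^sup>2 + a\<^sup>2 + b\<^sup>2))"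
proof -
  have ab: "a < b" using w0 by (simp add: strip_def)
  define h where "h w = g w * exp (- of_real \<epsilon> * w\<^sup>2)" for w
  have "((\<lambda>T. A * exp (B * T - \<epsilon> * T\<^sup>2)) \<longlongrightarrow> 0) at_top"
    using \<open>\<epsilon> > 0\<close> by real_asymp
  from order_tendstoD(2)[OF this zero_less_one]
  have "eventually (\<lambda>T. A * exp (B * T - \<epsilon> * T\<^sup>2) < 1 \<and> \<bar>Re w0\<bar> < T) at_top"
    by (intro eventually_conj eventually_gt_at_top)
  then obtain T where decay: "A * exp (B * T - \<epsilon> * T\<^sup>2) < 1" and T: "\<bar>Re w0\<bar> < T"
    unfolding eventually_at_top_linorder by blast
  define R where "R = box (Complex (- T) a) (Complex T b)"
  have R_strip: "R \<subseteq> strip a b"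
    by (auto simp: R_def strip_def in_box_complex_iff)
  have w0R: "w0 \<in> R"
    using w0 T by (auto simp: R_def strip_def in_box_complex_iff)
  have "h holomorphic_on interior R"
    unfolding h_def R_def interior_open[OF open_box] unfolding R_def[symmetric]
    by (intro holomorphic_intros holomorphic_on_subset[OF hol R_strip])
  moreover have "continuous_on (closure R) h"
    unfolding h_def using closure_mono[OF R_strip]
    by (intro continuous_intros continuous_on_subset[OF cont])
  moreover have "cmod (h z) \<le> exp (\<epsilon> * (a\<^sup>2 + b\<^sup>2))" if z: "z \<in> frontier R" for z
  proof -
    have "R \<noteq> {}" using w0R by blast
    then have z_cases: "\<bar>Re z\<bar> \<le> T" "a \<le> Im z" "Im z \<le> b" "Im z = a \<or> Im z = b \<or> \<bar>Re z\<bar> = T"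
      using z by (auto simp: frontier_box R_def in_box_complex_iff in_cbox_complex_iff)
    have "cmod (g z) \<le> A * exp (B * \<bar>Re z\<bar>)"
      using growth z_cases closure_strip[OF ab] by simp
    moreover have "Im z = a \<or> Im z = b \<Longrightarrow> cmod (g z) \<le> 1"
      using lower[of "Re z"] upper[of "Re z"] by (cases z) auto
    ultimately show ?thesis
      unfolding h_def using z_cases by (intro gaussian_damped_bound_rectangle_boundary[OF \<open>\<epsilon> > 0\<close> decay])
  qed
  ultimately have "cmod (h w0) \<le> exp (\<epsilon> * (a\<^sup>2 + b\<^sup>2))"
    using maximum_modulus_frontier[of h R] w0R by (simp add: R_def)
  then have "cmod (g w0) \<le> exp (\<epsilon> * (a\<^sup>2 + b\<^sup>2)) / exp (\<epsilon> * ((Im w0)\<^sup>2 - (Re w0)\<^sup>2))"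
    unfolding h_def norm_mult_exp_gaussian by (simp add: pos_le_divide_eq)
  also have "\<dots> = exp (\<epsilon> * ((Re w0)\<^sup>2 - (Im w0)\<^sup>2 + a\<^sup>2 + b\<^sup>2))"
    by (simp flip: exp_diff add: algebra_simps)
  finally show ?thesis .
qed

lemma phragmen_lindelof_strip:
  fixes g :: "complex \<Rightarrow> complex" and a b A B :: real
  assumes "a < b"
    and hol: "g holomorphic_on strip a b"
    and cont: "continuous_on (closure (strip a b)) g"
    and growth: "\<And>w. w \<in> closure (strip a b) \<Longrightarrow> cmod (g w) \<le> A * exp (B * \<bar>Re w\<bar>)"
    and lower: "\<And>t. cmod (g (Complex t a)) \<le> 1"
    and upper: "\<And>t. cmod (g (Complex t b)) \<le> 1"
    and w: "w \<in> closure (strip a b)"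
  shows "cmod (g w) \<le> 1"
proof (cases "w \<in> strip a b")
  case True
  define c where "c = (Re w)\<^sup>2 - (Im w)\<^sup>2 + a\<^sup>2 + b\<^sup>2"
  have bound: "cmod (g w) \<le> exp (\<epsilon> * c)" if "\<epsilon> > 0" for \<epsilon>
    unfolding c_def by (rule phragmen_lindelof_strip_damped[of g a b A B, OF hol cont growth lower upper that True])
  have "((\<lambda>\<epsilon>. exp (\<epsilon> * c)) \<longlongrightarrow> 1) (at_right 0)"
    by (auto intro!: tendsto_eq_intros)
  moreover have "eventually (\<lambda>\<epsilon>. cmod (g w) \<le> exp (\<epsilon> * c)) (at_right 0)"
    using eventually_at_right_less[of 0] by (rule eventually_mono) (rule bound)
  ultimately show ?thesis
    by (rule tendsto_lowerbound) simp
next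
  case False
  then have "Im w = a \<or> Im w = b"
    using w closure_strip[OF \<open>a < b\<close>] by (auto simp: strip_def)
  then show ?thesis
    using lower[of "Re w"] upper[of "Re w"] by (cases w) auto
qed

definition strip_interpolant :: "real \<Rightarrow> real \<Rightarrow> real \<Rightarrow> real \<Rightarrow> complex \<Rightarrow> complex" where
  "strip_interpolant a b L lam z =
     \<i> * (z - \<i> * of_real b) * (of_real L - of_real lam * (z - \<i> * of_real b) / 2) / of_real (b - a)"

lemma Re_strip_interpolant:
  "a < b \<Longrightarrow> Re (strip_interpolant a b L lam z) = (b - Im z) / (b - a) * (L - lam * Re z)"
  by (simp add: strip_interpolant_def field_simps power2_eq_square)

lemma abs_Re_strip_interpolant_le:
  assumes "a \<le> Im z" "Im z \<le> b" "a < b"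
  shows "\<bar>Re (strip_interpolant a b L lam z)\<bar> \<le> \<bar>L\<bar> + \<bar>lam\<bar> * \<bar>Re z\<bar>"
proof -
  have "\<bar>(b - Im z) / (b - a)\<bar> \<le> 1"
    using assms by (intro abs_leI) (simp_all add: divide_le_eq le_divide_eq)
  then have "\<bar>Re (strip_interpolant a b L lam z)\<bar> \<le> \<bar>L - lam * Re z\<bar>"
    unfolding Re_strip_interpolant[OF \<open>a < b\<close>] abs_mult
    by (rule mult_left_le_one_le[OF abs_ge_zero abs_ge_zero])
  also have "\<dots> \<le> \<bar>L\<bar> + \<bar>lam\<bar> * \<bar>Re z\<bar>"
    using abs_triangle_ineq4[of L "lam * Re z"] by (simp add: abs_mult)
  finally show ?thesis .
qed

lemma strip_interpolation_bound:
  fixes F :: "complex \<Rightarrow> complex" and a b K L lam :: real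
  assumes "a < b"
    and hol: "F holomorphic_on strip a b"
    and cont: "continuous_on (closure (strip a b)) F"
    and "K \<ge> 1"
    and bounded: "\<And>w. w \<in> closure (strip a b) \<Longrightarrow> cmod (F w) \<le> K"
    and lower: "\<And>t. cmod (F (Complex t a)) \<le> exp (L - lam * t)"
    and w: "w \<in> closure (strip a b)"
  shows "cmod (F w) \<le> K * exp ((b - Im w) / (b - a) * (L - lam * Re w))"
proof -
  let ?\<psi> = "strip_interpolant a b L lam"
  define g where "g z = F z * exp (- ?\<psi> z) / of_real K" for z
  have norm_g: "cmod (g z) = cmod (F z) / K * exp (- Re (?\<psi> z))" for z
    using \<open>K \<ge> 1\<close> by (simp add: g_def norm_mult norm_divide)
  have "cmod (g w) \<le> 1"
  proof (rule phragmen_lindelof_strip[OF \<open>a < b\<close> _ _ _ _ _ w])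
    show "g holomorphic_on strip a b"
      unfolding g_def strip_interpolant_def using hol \<open>a < b\<close> \<open>K \<ge> 1\<close>
      by (intro holomorphic_intros) auto
    show "continuous_on (closure (strip a b)) g"
      unfolding g_def strip_interpolant_def using cont \<open>a < b\<close> \<open>K \<ge> 1\<close>
      by (intro continuous_intros) auto
    show "cmod (g z) \<le> exp \<bar>L\<bar> * exp (\<bar>lam\<bar> * \<bar>Re z\<bar>)" if z: "z \<in> closure (strip a b)" for z
    proof -
      have "- Re (?\<psi> z) \<le> \<bar>L\<bar> + \<bar>lam\<bar> * \<bar>Re z\<bar>"
        using z closure_strip[OF \<open>a < b\<close>] \<open>a < b\<close>
        by (intro abs_le_D2 abs_Re_strip_interpolant_le) auto
      then have exp_bound: "exp (- Re (?\<psi> z)) \<le> exp \<bar>L\<bar> * exp (\<bar>lam\<bar> * \<bar>Re z\<bar>)"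
        by (simp flip: exp_add)
      have "cmod (g z) \<le> exp (- Re (?\<psi> z))"
        unfolding norm_g using bounded[OF z] \<open>K \<ge> 1\<close> by (intro mult_left_le_one_le) simp_all
      with exp_bound show ?thesis
        by linarith
    qed
    show "cmod (g (Complex t a)) \<le> 1" for t
    proof -
      have "Re (?\<psi> (Complex t a)) = L - lam * t"
        using \<open>a < b\<close> by (simp add: Re_strip_interpolant)
      then have "cmod (F (Complex t a)) * exp (- Re (?\<psi> (Complex t a)))
          \<le> exp (L - lam * t) * exp (- (L - lam * t))"
        using lower[of t] by (simp add: mult_right_mono)
      then show ?thesis
        unfolding norm_g using \<open>K \<ge> 1\<close> by (simp add: divide_le_eq flip: exp_add)
    qed
    show "cmod (g (Complex t b)) \<le> 1" for t
      unfolding norm_g Re_strip_interpolant[OF \<open>a < b\<close>]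
      using bounded[of "Complex t b"] closure_strip[OF \<open>a < b\<close>] \<open>a < b\<close> \<open>K \<ge> 1\<close>
      by simp
  qed
  then show ?thesis
    unfolding norm_g Re_strip_interpolant[OF \<open>a < b\<close>, symmetric] using \<open>K \<ge> 1\<close>
    by (simp add: exp_minus field_simps)
qed

lemma exp_Complex: "exp (Complex t s) = of_real (exp t) * cis s"
  by (simp add: exp_eq_polar exp_of_real)

lemma exp_strip_subset_sector: "exp ` strip \<alpha> \<beta> \<subseteq> sector \<alpha> \<beta>"
  by (auto simp: strip_def sector_def exp_eq_polar norm_mult)

lemma exp_closure_strip_subset_closure_sector: "exp ` closure (strip \<alpha> \<beta>) \<subseteq> closure (sector \<alpha> \<beta>)"
  using exp_strip_subset_sector closure_subset
  by (intro image_closure_subset continuous_intros closed_closure) blast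

theorem lemma5p1:
  fixes f :: "complex \<Rightarrow> complex" and \<alpha> \<beta> M C lam :: real
  assumes "\<alpha> < \<beta>"
    and "f holomorphic_on sector \<alpha> \<beta>"
    and "continuous_on (closure (sector \<alpha> \<beta>)) f"
    and "M > 0" and "C > 0" and "lam > 0"
    and "\<And>z. z \<in> sector \<alpha> \<beta> \<Longrightarrow> cmod (f z) \<le> M"
    and "\<And>r. r > 0 \<Longrightarrow> cmod (f (of_real r * cis \<alpha>)) \<le> C / r powr lam"
  shows "\<And>r \<theta>. r > 0 \<Longrightarrow> \<alpha> \<le> \<theta> \<Longrightarrow> \<theta> \<le> \<beta> \<Longrightarrow>
           cmod (f (of_real r * cis \<theta>)) \<le> max 1 M * (C / r powr lam) powr ((\<beta> - \<theta>) / (\<beta> - \<alpha>))"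
proof -
  fix r \<theta> :: real
  assume "r > 0" "\<alpha> \<le> \<theta>" "\<theta> \<le> \<beta>"
  have hol: "(f \<circ> exp) holomorphic_on strip \<alpha> \<beta>"
    by (rule holomorphic_on_compose_gen[OF holomorphic_on_exp assms(2) exp_strip_subset_sector])
  have cont: "continuous_on (closure (strip \<alpha> \<beta>)) (f \<circ> exp)"
    by (rule continuous_on_compose[OF continuous_on_exp[OF continuous_on_id]
          continuous_on_subset[OF assms(3) exp_closure_strip_subset_closure_sector]])
  have bounded: "cmod ((f \<circ> exp) w) \<le> max 1 M" if "w \<in> closure (strip \<alpha> \<beta>)" for w
    using continuous_on_closure_norm_le[OF assms(3)] assms(7) exp_closure_strip_subset_closure_sector that
    by fastforce
  have lower: "cmod ((f \<circ> exp) (Complex t \<alpha>)) \<le> exp (ln C - lam * t)" for t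
    using assms(8)[of "exp t"] \<open>C > 0\<close> by (simp add: exp_Complex powr_def exp_diff)
  have "Complex (ln r) \<theta> \<in> closure (strip \<alpha> \<beta>)"
    using closure_strip[OF assms(1)] \<open>\<alpha> \<le> \<theta>\<close> \<open>\<theta> \<le> \<beta>\<close> by simp
  from strip_interpolation_bound[OF assms(1) hol cont _ bounded lower this]
  have "cmod (f (of_real r * cis \<theta>)) \<le> max 1 M * exp ((\<beta> - \<theta>) / (\<beta> - \<alpha>) * (ln C - lam * ln r))"
    using \<open>r > 0\<close> by (simp add: exp_Complex)
  also have "exp ((\<beta> - \<theta>) / (\<beta> - \<alpha>) * (ln C - lam * ln r)) = (C / r powr lam) powr ((\<beta> - \<theta>) / (\<beta> - \<alpha>))"
    using \<open>r > 0\<close> \<open>C > 0\<close> by (simp add: powr_def ln_div ln_powr mult.commute)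
  finally show "cmod (f (of_real r * cis \<theta>)) \<le> max 1 M * (C / r powr lam) powr ((\<beta> - \<theta>) / (\<beta> - \<alpha>))" .
qed

end
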